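(* For every $n\geq1$ and every $0<\alpha\leq 2$, $d_\alpha$ is a homogeneous distance on $\mathbb H^n$.
   Context: $\mathbb H^n=\mathbb R^{2n+1}=\{(x,y,z): x,y\in\mathbb R^n, z\in\mathbb R\}$ with the Euclidean topology and group law $(x,y,z)\cdot(x',y',z')=(x+x',y+y',z+z'+\tfrac12\langle x,y'\rangle-\tfrac12\langle y,x'\rangle)$. Dilations: $\delta_\lambda(x,y,z)=(\lambda x,\lambda y,\lambda^2 z)$. $B_\alpha$ is the closed Euclidean ball of radius $\alpha$ centered at $0$ in $\mathbb R^{2n+1}$, and $d_\alpha(p,q)=\inf\{r>0:\delta_{1/r}(p^{-1}\cdot q)\in B_\alpha\}$. A distance $d$ on $\mathbb H^n$ is homogeneous if it induces the Euclidean topology, is left invariant ($d(p\cdot q,p\cdot q')=d(q,q')$) and satisfies $d(\delta_\lambda p,\delta_\lambda q)=\lambda d(p,q)$ for all $\lambda>0$. *)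

theory Defs
  imports "HOL-Analysis.Analysis"
begin

text \<open>Heisenberg group H^n modelled on R^n x R^n x R; the dimension n is the
cardinality of the finite index type 'n (so n >= 1 automatically).  The norm on the
product type is the Euclidean norm of R^(2n+1) and its topology is the Euclidean one.\<close>

type_synonym 'n heis = "(real^'n) \<times> (real^'n) \<times> real"

definition hmult :: "'n::finite heis \<Rightarrow> 'n heis \<Rightarrow> 'n heis" where
  "hmult p q = (case p of (x, y, z) \<Rightarrow> case q of (x', y', z') \<Rightarrow>
     (x + x', y + y', z + z' + (1/2) * (x \<bullet> y') - (1/2) * (y \<bullet> x')))"

definition hinv :: "'n::finite heis \<Rightarrow> 'n heis" where
  "hinv p = (case p of (x, y, z) \<Rightarrow> (-x, -y, -z))"

definition hdil :: "real \<Rightarrow> 'n::finite heis \<Rightarrow> 'n heis" where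
  "hdil l p = (case p of (x, y, z) \<Rightarrow> (l *\<^sub>R x, l *\<^sub>R y, l^2 * z))"

definition d_alpha :: "real \<Rightarrow> 'n::finite heis \<Rightarrow> 'n heis \<Rightarrow> real" where
  "d_alpha a p q = Inf {r. r > 0 \<and> hdil (1/r) (hmult (hinv p) q) \<in> cball 0 a}"

definition homogeneous_distance :: "('n::finite heis \<Rightarrow> 'n heis \<Rightarrow> real) \<Rightarrow> bool" where
  "homogeneous_distance d \<longleftrightarrow>
     (\<forall>p q. d p q = 0 \<longleftrightarrow> p = q) \<and>
     (\<forall>p q. d p q = d q p) \<and>
     (\<forall>p q r. d p r \<le> d p q + d q r) \<and>
     (\<forall>U. open U \<longleftrightarrow> (\<forall>p\<in>U. \<exists>e>0. \<forall>q. d p q < e \<longrightarrow> q \<in> U)) \<and>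
     (\<forall>p q q'. d (hmult p q) (hmult p q') = d q q') \<and>
     (\<forall>l p q. l > 0 \<longrightarrow> d (hdil l p) (hdil l q) = l * d p q)"

end

theory Submission
  imports Defs
begin

(* For 0 < a the set B_a is "star-shaped under dilations", so
   d_alpha a p q is the value at p^-1 q of the gauge
     gauge a (x,y,z) = sqrt ((|x|^2 + |y|^2 + sqrt ((|x|^2+|y|^2)^2 + 4 a^2 z^2)) / (2 a^2)),
   which is characterised by: gauge a p <= r  iff  delta_{1/r} p lies in B_a.
   Symmetry, left invariance, homogeneity and non-degeneracy of d_alpha then reduce to
   elementary group identities and properties of the gauge.  The only real work is the
   triangle inequality: for a <= 2 the ball B_a is closed under the "convex product"
   P, Q |-> delta_s P * delta_t Q (s + t = 1), which rests on a Cauchy-Schwarz-type bound for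
   the symplectic form and an explicit quadratic estimate.  Finally, the gauge is continuous
   and gauge-small points are Euclidean-small, so d_alpha induces the Euclidean topology. *)

lemma hmult_simp:
  "hmult (x,y,z) (x',y',z') = (x + x', y + y', z + z' + (1/2) * (x \<bullet> y') - (1/2) * (y \<bullet> x'))"
  by (simp add: hmult_def)

lemma hinv_simp: "hinv (x,y,z) = (-x,-y,-z)"
  by (simp add: hinv_def)

lemma hdil_simp: "hdil l (x,y,z) = (l *\<^sub>R x, l *\<^sub>R y, l^2 * z)"
  by (simp add: hdil_def)

lemma hmult_hinv_eq_origin: "hmult (hinv p) q = (0,0,0) \<longleftrightarrow> p = q"
  by (cases p; cases q) (auto simp: hmult_simp hinv_simp inner_commute)

lemma hinv_hmult_hinv: "hinv (hmult (hinv p) q) = hmult (hinv q) p"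
  by (cases p; cases q) (simp add: hmult_simp hinv_simp inner_commute algebra_simps)

lemma hmult_hinv_chain: "hmult (hinv p) r = hmult (hmult (hinv p) q) (hmult (hinv q) r)"
  by (cases p; cases q; cases r) (simp add: hmult_simp hinv_simp inner_commute algebra_simps inner_simps)

lemma hmult_hinv_left_translate: "hmult (hinv (hmult p q)) (hmult p q') = hmult (hinv q) q'"
  by (cases p; cases q; cases q') (simp add: hmult_simp hinv_simp inner_commute algebra_simps inner_simps)

lemma hmult_hinv_hdil: "hmult (hinv (hdil l p)) (hdil l q) = hdil l (hmult (hinv p) q)"
  by (cases p; cases q)
    (simp add: hmult_simp hinv_simp hdil_simp inner_commute algebra_simps inner_simps power2_eq_square)

lemma hdil_hmult: "hdil l (hmult p q) = hmult (hdil l p) (hdil l q)"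
  by (cases p; cases q) (simp add: hmult_simp hdil_simp inner_commute algebra_simps inner_simps power2_eq_square)

lemma hdil_hdil: "hdil l (hdil m p) = hdil (l * m) p"
  by (cases p) (simp add: hdil_simp power_mult_distrib)

lemma hmult_hinv_cancel: "hmult p (hmult (hinv p) q) = q"
  by (cases p; cases q) (simp add: hmult_simp hinv_simp inner_commute algebra_simps)

lemma hmult_origin_right: "hmult p (0,0,0) = p"
  by (cases p) (simp add: hmult_simp)

lemma hmult_continuous: "continuous_on UNIV (hmult (p::'n::finite heis))"
proof -
  have eq: "hmult p = (\<lambda>q. (fst p + fst q, fst (snd p) + fst (snd q),
      snd (snd p) + snd (snd q) + (1/2) * (fst p \<bullet> fst (snd q)) - (1/2) * (fst (snd p) \<bullet> fst q)))"
    by (intro ext) (simp add: hmult_def split: prod.splits)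
  show ?thesis unfolding eq by (intro continuous_intros)
qed

lemma norm_heis_sq: "(norm ((x,y,z)::'n::finite heis))^2 = norm x^2 + norm y^2 + z^2"
  by (simp add: norm_Pair)

section \<open>The gauge of B_a\<close>

text \<open>The gauge of B_a, in closed form; it is the Minkowski functional of B_a with respect to
  the dilations (see gauge_le_iff below).\<close>
definition gauge :: "real \<Rightarrow> 'n::finite heis \<Rightarrow> real" where
  "gauge a p = (case p of (x, y, z) \<Rightarrow>
     sqrt ((norm x^2 + norm y^2 + sqrt ((norm x^2 + norm y^2)^2 + 4*a^2*z^2)) / (2*a^2)))"

lemma gauge_nonneg: "gauge a p \<ge> 0"
  by (cases p) (simp add: gauge_def)

lemma gauge_hinv: "gauge a (hinv p) = gauge a p"
  by (cases p) (simp add: gauge_def hinv_simp)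

lemma gauge_continuous: "continuous_on UNIV (gauge a :: 'n::finite heis \<Rightarrow> real)"
proof -
  have eq: "gauge a = (\<lambda>p. sqrt ((norm (fst p)^2 + norm (fst (snd p))^2 +
      sqrt ((norm (fst p)^2 + norm (fst (snd p))^2)^2 + 4*a^2*(snd (snd p))^2)) / (2*a^2)))"
    by (intro ext) (simp add: gauge_def split: prod.splits)
  show ?thesis unfolding eq divide_inverse by (intro continuous_intros)
qed

lemma hdil_in_cball_iff:
  fixes x y :: "real^'n::finite"
  assumes r: "r > 0" and a: "a > 0"
  shows "hdil (1/r) (x,y,z) \<in> cball 0 a \<longleftrightarrow> (norm x^2 + norm y^2) * r^2 + z^2 \<le> a^2 * r^4"
proof -
  have "hdil (1/r) (x,y,z) \<in> cball 0 a \<longleftrightarrow> norm (hdil (1/r) (x,y,z))^2 \<le> a^2"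
    using a by (simp add: abs_le_square_iff[symmetric])
  also have "norm (hdil (1/r) (x,y,z))^2 = ((norm x^2 + norm y^2) * r^2 + z^2) / r^4"
    unfolding hdil_simp norm_heis_sq using r by (simp add: field_simps power_def)
  finally show ?thesis using r by (simp add: divide_le_eq)
qed

text \<open>The same polynomial inequality is equivalent to the gauge bound, by solving the
  quadratic inequality in r^2.\<close>
lemma gauge_le_iff_poly:
  fixes x y :: "real^'n::finite"
  assumes r: "r > 0" and a: "a > 0"
  shows "gauge a (x,y,z) \<le> r \<longleftrightarrow> (norm x^2 + norm y^2) * r^2 + z^2 \<le> a^2 * r^4"
proof -
  define A where "A = norm x^2 + norm y^2"
  define \<rho> where "\<rho> = r^2"
  define S where "S = sqrt (A^2 + 4*a^2*z^2)"
  have A0: "A \<ge> 0" and \<rho>0: "\<rho> > 0" and S0: "S \<ge> 0"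
    using r by (simp_all add: A_def \<rho>_def S_def)
  have "gauge a (x,y,z) \<le> r \<longleftrightarrow> (A + S) / (2*a^2) \<le> \<rho>"
    unfolding gauge_def A_def \<rho>_def S_def using r A0 S0 by (simp add: real_sqrt_le_iff')
  also have "\<dots> \<longleftrightarrow> S \<le> 2*a^2*\<rho> - A"
    using a by (simp add: divide_le_eq algebra_simps)
  also have "\<dots> \<longleftrightarrow> A*\<rho> + z^2 \<le> a^2*\<rho>^2"
  proof
    assume "S \<le> 2*a^2*\<rho> - A"
    then have "A^2 + 4*a^2*z^2 \<le> (2*a^2*\<rho> - A)^2"
      unfolding S_def by (rule sqrt_le_D)
    then have "a^2 * (A*\<rho> + z^2) \<le> a^2 * (a^2*\<rho>^2)"
      by (simp add: power2_eq_square algebra_simps)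
    from mult_left_le_imp_le[OF this] show "A*\<rho> + z^2 \<le> a^2*\<rho>^2" using a by simp
  next
    assume h: "A*\<rho> + z^2 \<le> a^2*\<rho>^2"
    then have "A*\<rho> \<le> a^2*\<rho>^2" using zero_le_power2[of z] by linarith
    then have "A*\<rho> \<le> (a^2*\<rho>)*\<rho>" by (simp add: power2_eq_square algebra_simps)
    then have "A \<le> a^2*\<rho>" using \<rho>0 by simp
    moreover have "a^2*\<rho> > 0" using a \<rho>0 by simp
    ultimately have nonneg: "2*a^2*\<rho> - A \<ge> 0" by linarith
    have "4*a^2*(A*\<rho> + z^2) \<le> 4*a^2*(a^2*\<rho>^2)" using h by (intro mult_left_mono) auto
    then have "A^2 + 4*a^2*z^2 \<le> (2*a^2*\<rho> - A)^2" by (simp add: power2_eq_square algebra_simps)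
    then show "S \<le> 2*a^2*\<rho> - A" unfolding S_def using nonneg real_le_lsqrt by blast
  qed
  finally show ?thesis by (simp add: A_def \<rho>_def algebra_simps flip: power_mult)
qed

lemma gauge_le_iff:
  assumes r: "r > 0" and a: "a > 0"
  shows "gauge a p \<le> r \<longleftrightarrow> hdil (1/r) p \<in> cball 0 a"
  by (cases p) (simp only: gauge_le_iff_poly[OF r a] hdil_in_cball_iff[OF r a])

lemma gauge_eq_0_iff:
  assumes a: "a > 0"
  shows "gauge a p = 0 \<longleftrightarrow> p = (0,0,0)"
proof (cases p)
  case (fields x y z)
  define A where "A = norm x^2 + norm y^2"
  have A0: "A \<ge> 0" by (simp add: A_def)
  have "gauge a p = 0 \<longleftrightarrow> A + sqrt (A^2 + 4*a^2*z^2) = 0"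
    using a by (simp add: fields gauge_def A_def)
  also have "\<dots> \<longleftrightarrow> A = 0 \<and> z = 0"
  proof
    assume "A + sqrt (A^2 + 4*a^2*z^2) = 0"
    moreover have "sqrt (A^2 + 4*a^2*z^2) \<ge> 0" by simp
    ultimately have "A = 0" and "sqrt (A^2 + 4*a^2*z^2) = 0" using A0 by linarith+
    then show "A = 0 \<and> z = 0" using a by simp
  qed simp
  also have "\<dots> \<longleftrightarrow> p = (0,0,0)"
    by (simp add: fields A_def add_nonneg_eq_0_iff)
  finally show ?thesis .
qed

lemma gauge_hdil:
  assumes l: "l > 0"
  shows "gauge a (hdil l p) = l * gauge a p"
proof (cases p)
  case (fields x y z)
  define A where "A = norm x^2 + norm y^2"
  define Q where "Q = (A + sqrt (A^2 + 4*a^2*z^2)) / (2*a^2)"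
  have "(l^2 * A)^2 + 4*a^2*(l^2*z)^2 = (l^2)^2 * (A^2 + 4*a^2*z^2)"
    by (simp add: power2_eq_square algebra_simps)
  then have "sqrt ((l^2 * A)^2 + 4*a^2*(l^2*z)^2) = l^2 * sqrt (A^2 + 4*a^2*z^2)"
    by (simp only: real_sqrt_mult real_sqrt_abs abs_power2)
  then have "(l^2 * A + sqrt ((l^2 * A)^2 + 4*a^2*(l^2*z)^2)) / (2*a^2) = l^2 * Q"
    by (simp add: Q_def algebra_simps add_divide_distrib)
  moreover have "norm (l *\<^sub>R x)^2 + norm (l *\<^sub>R y)^2 = l^2 * A"
    using l by (simp add: A_def power_mult_distrib algebra_simps)
  ultimately have "gauge a (hdil l p) = sqrt (l^2 * Q)"
    by (simp add: fields gauge_def hdil_simp)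
  also have "\<dots> = l * sqrt Q"
    using l by (simp add: real_sqrt_mult)
  also have "sqrt Q = gauge a p"
    by (simp add: fields gauge_def Q_def A_def)
  finally show ?thesis .
qed

lemma norm_hdil_le:
  assumes r: "0 \<le> r" "r \<le> 1"
  shows "norm (hdil r q) \<le> r * norm q"
proof (cases q)
  case (fields x y z)
  have "r^4 * z^2 \<le> r^2 * z^2"
    using r by (intro mult_right_mono power_decreasing) simp_all
  moreover have "norm (hdil r q)^2 = r^2 * norm x^2 + r^2 * norm y^2 + r^4 * z^2"
    by (simp add: fields hdil_simp norm_heis_sq power_mult_distrib flip: power_mult)
  moreover have "(r * norm q)^2 = r^2 * norm x^2 + r^2 * norm y^2 + r^2 * z^2"
    by (simp add: fields norm_heis_sq power_mult_distrib distrib_left)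
  ultimately have "norm (hdil r q)^2 \<le> (r * norm q)^2" by linarith
  moreover have "0 \<le> r * norm q" using r by simp
  ultimately show ?thesis by (rule power2_le_imp_le)
qed

lemma norm_le_of_gauge_le:
  assumes a: "a > 0" and r: "0 < r" "r \<le> 1" and h: "gauge a p \<le> r"
  shows "norm p \<le> a * r"
proof -
  have "hdil r (hdil (1/r) p) = p"
    unfolding hdil_hdil using r by (cases p) (simp add: hdil_simp)
  moreover have "norm (hdil (1/r) p) \<le> a"
    using h gauge_le_iff[OF r(1) a, of p] by simp
  ultimately show ?thesis
    using norm_hdil_le[of r "hdil (1/r) p"] r by (simp add: mult.commute mult_left_mono order_trans)
qed

lemma Inf_positive_ray:
  fixes G :: real
  assumes "G \<ge> 0"
  shows "Inf {r. r > 0 \<and> G \<le> r} = G"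
proof (cases "G = 0")
  case True
  then have "{r. r > 0 \<and> G \<le> r} = {0<..}" by auto
  then show ?thesis using True by simp
next
  case False
  then have "{r. r > 0 \<and> G \<le> r} = {G..}" using assms by auto
  then show ?thesis by simp
qed

lemma d_alpha_eq_gauge:
  assumes a: "a > 0"
  shows "d_alpha a p q = gauge a (hmult (hinv p) q)"
proof -
  have "{r. r > 0 \<and> hdil (1/r) (hmult (hinv p) q) \<in> cball 0 a}
      = {r. r > 0 \<and> gauge a (hmult (hinv p) q) \<le> r}"
    using gauge_le_iff[OF _ a] by blast
  then show ?thesis unfolding d_alpha_def using Inf_positive_ray[OF gauge_nonneg] by simp
qed

section \<open>B_a is closed under convex products when a \<le> 2\<close>

lemma bessel_two:
  fixes w e1 e2 :: "'a::real_inner"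
  assumes orth: "e1 \<bullet> e2 = 0" and len: "norm e2 = norm e1"
  shows "(w \<bullet> e1)^2 + (w \<bullet> e2)^2 \<le> norm w^2 * norm e1^2"
proof -
  define k where "k = norm e1^2"
  define v where "v = k *\<^sub>R w - (w \<bullet> e1) *\<^sub>R e1 - (w \<bullet> e2) *\<^sub>R e2"
  have e11: "e1 \<bullet> e1 = k" and e22: "e2 \<bullet> e2 = k"
    using len by (simp_all add: k_def flip: power2_norm_eq_inner)
  have ww: "w \<bullet> w = norm w^2" by (simp add: power2_norm_eq_inner)
  have "0 \<le> v \<bullet> v" by simp
  also have "v \<bullet> v = k * (k * norm w^2 - (w \<bullet> e1)^2 - (w \<bullet> e2)^2)"
    unfolding v_def using e11 e22 orth ww
    by (simp add: inner_diff_left inner_diff_right inner_commute power2_eq_square algebra_simps)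
  finally have nonneg: "0 \<le> k * (k * norm w^2 - (w \<bullet> e1)^2 - (w \<bullet> e2)^2)" .
  show ?thesis
  proof (cases "k = 0")
    case True
    then have "e1 = 0" "e2 = 0" using len by (auto simp: k_def)
    then show ?thesis by simp
  next
    case False
    then have "k > 0" by (simp add: k_def)
    with nonneg have "0 \<le> k * norm w^2 - (w \<bullet> e1)^2 - (w \<bullet> e2)^2"
      by (simp add: zero_le_mult_iff)
    then show ?thesis by (simp add: k_def algebra_simps)
  qed
qed

text \<open>Joint Cauchy-Schwarz bound for the Euclidean and the symplectic pairing on pairs of vectors:
  apply Bessel to the orthogonal pair (x',y'), (y',-x').\<close>
lemma inner_symplectic_bound:
  fixes x y x' y' :: "'a::real_inner"
  shows "(x \<bullet> x' + y \<bullet> y')^2 + 4 * ((1/2) * (x \<bullet> y' - y \<bullet> x'))^2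
     \<le> (norm x^2 + norm y^2) * (norm x'^2 + norm y'^2)"
proof -
  have "((x,y) \<bullet> (x',y'))^2 + ((x,y) \<bullet> (y', -x'))^2 \<le> norm (x,y)^2 * norm (x',y')^2"
    by (rule bessel_two) (simp_all add: inner_commute norm_Pair add.commute)
  then show ?thesis by (simp add: norm_Pair power_mult_distrib power2_eq_square algebra_simps)
qed

lemma norm_scaleR_add_sq:
  fixes x x' :: "'a::real_inner"
  shows "norm (s *\<^sub>R x + t *\<^sub>R x')^2 = s^2 * norm x^2 + t^2 * norm x'^2 + 2 * s * t * (x \<bullet> x')"
  unfolding power2_norm_eq_inner
  by (simp add: inner_add_left inner_add_right inner_commute power2_eq_square algebra_simps)

text \<open>Writing A, A' for the horizontal squared norms of two points, ii for their inner product and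
  ww for their symplectic pairing, a radius bound of 4 controls the cross terms.\<close>
lemma cross_terms_le:
  fixes ii ww A A' :: real
  assumes A0: "A \<ge> 0" "A' \<ge> 0" and CS: "ii^2 + 4 * ww^2 \<le> A * A'"
    and A4: "A \<le> 4" "A' \<le> 4"
  shows "2 * ii + ww^2 \<le> A + A'"
proof -
  define g where "g = sqrt (A * A')"
  have g0: "g \<ge> 0" and gsq: "g^2 = A * A'" using A0 by (simp_all add: g_def)
  have "A * A' \<le> 4 * 4" using A0 A4 by (intro mult_mono) auto
  then have "g \<le> 4" unfolding g_def by (intro real_le_lsqrt) auto
  moreover have "\<bar>ii\<bar> \<le> g"
  proof -
    have "ii^2 \<le> g^2" using CS gsq zero_le_power2[of ww] by linarith
    then have "\<bar>ii\<bar>^2 \<le> g^2" by simp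
    then show ?thesis using g0 by (rule power2_le_imp_le)
  qed
  ultimately have "(g - ii) * (g + ii) \<le> (g - ii) * 8"
    by (intro mult_left_mono) (simp_all add: abs_le_iff)
  then have "4 * ww^2 \<le> 8 * g - 8 * ii" using CS gsq by (simp add: power2_eq_square algebra_simps)
  moreover have "2 * g \<le> A + A'"
    using arith_geo_mean_sqrt[OF A0] by (simp add: g_def)
  ultimately show ?thesis by linarith
qed

text \<open>The defect of the convex-product estimate is non-positive at an endpoint
  (here: D = ww - b - c, b and c the vertical coordinates).\<close>
lemma endpoint_defect_nonpos:
  fixes ii ww A A' b c a :: real
  assumes cross: "2 * ii + ww^2 \<le> A + A'" and h1: "A + b^2 \<le> a^2" and h2: "A' + c^2 \<le> a^2"
  shows "2 * (ii + b * c - a^2) + 2 * b * (ww - b - c) + (ww - b - c)^2/4 \<le> 0"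
proof -
  have "2 * (ii + b * c - a^2) + 2 * b * (ww - b - c) + (ww - b - c)^2/4
      \<le> - (ww^2) - 3 * b^2 - c^2 + 2 * b * ww + (ww - b - c)^2/4"
    using cross h1 h2 by (simp add: power2_eq_square algebra_simps)
  also have "\<dots> = - (3/4 * (ww - b + c/3)^2 + 2 * b^2 + 2/3 * c^2)"
    by (simp add: power2_eq_square field_simps)
  also have "\<dots> \<le> 0"
    by (intro neg_le_0_iff_le[THEN iffD2] add_nonneg_nonneg) simp_all
  finally show ?thesis .
qed

text \<open>Interpolating the two endpoint estimates.\<close>
lemma convex_defect_nonpos:
  fixes ii ww A A' b c a s t :: real
  assumes cross: "2 * ii + ww^2 \<le> A + A'" and h1: "A + b^2 \<le> a^2" and h2: "A' + c^2 \<le> a^2"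
    and st: "s \<ge> 0" "t \<ge> 0" "s + t = 1"
  shows "2 * (ii + b * c - a^2) + 2 * (s * b + t * c) * (ww - b - c) + (ww - b - c)^2/4 \<le> 0"
proof -
  define D where "D = ww - b - c"
  define F where "F = 2 * (ii + b * c - a^2) + D^2/4"
  have "F + 2 * b * D \<le> 0"
    using endpoint_defect_nonpos[OF cross h1 h2] unfolding F_def D_def by linarith
  moreover have "F + 2 * c * D \<le> 0"
  proof -
    have "2 * ii + ww^2 \<le> A' + A" using cross by linarith
    from endpoint_defect_nonpos[OF this h2 h1]
    have "2 * (ii + c * b - a^2) + 2 * c * (ww - c - b) + (ww - c - b)^2/4 \<le> 0" .
    moreover have "ww - c - b = D" "c * b = b * c" by (simp_all add: D_def)
    ultimately show ?thesis unfolding F_def by simp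
  qed
  ultimately have "s * (F + 2 * b * D) + t * (F + 2 * c * D) \<le> 0"
    using st by (simp add: add_nonpos_nonpos mult_nonneg_nonpos)
  moreover have "s * (F + 2 * b * D) + t * (F + 2 * c * D) = (s + t) * F + 2 * (s * b + t * c) * D"
    by (simp add: algebra_simps)
  ultimately have "F + 2 * (s * b + t * c) * D \<le> 0" using st(3) by simp
  then show ?thesis unfolding F_def D_def by linarith
qed

lemma convex_product_estimate:
  fixes A A' ii ww b c a s t :: real
  assumes A0: "A \<ge> 0" "A' \<ge> 0" and CS: "ii^2 + 4 * ww^2 \<le> A * A'"
    and h1: "A + b^2 \<le> a^2" and h2: "A' + c^2 \<le> a^2" and a: "0 < a" "a \<le> 2"
    and st: "s \<ge> 0" "t \<ge> 0" "s + t = 1"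
  shows "s^2 * A + t^2 * A' + 2 * s * t * ii + (s^2 * b + t^2 * c + s * t * ww)^2 \<le> a^2"
proof -
  have "a^2 \<le> 2^2" using a by (intro power_mono) auto
  then have "a^2 \<le> 4" by simp
  then have "A \<le> 4" "A' \<le> 4" using h1 h2 zero_le_power2[of b] zero_le_power2[of c] by linarith+
  then have cross: "2 * ii + ww^2 \<le> A + A'" by (rule cross_terms_le[OF A0 CS])
  define D where "D = ww - b - c"
  define m where "m = s * b + t * c"
  define E where "E = 2 * (ii + b * c - a^2) + 2 * m * D + D^2/4"
  have E_nonpos: "E \<le> 0" unfolding E_def D_def m_def by (rule convex_defect_nonpos[OF cross h1 h2 st])
  have t: "t = 1 - s" using st by simp
  have "s * t \<le> 1/4"
    unfolding t using zero_le_power2[of "2 * s - 1"] by (simp add: power2_eq_square algebra_simps)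
  then have st4: "s * t * D^2 \<le> D^2/4"
    using mult_right_mono[of "s * t" "1/4" "D^2"] by simp
  have sum_sq: "s^2 + t^2 = 1 - 2 * s * t"
    unfolding t by (simp add: power2_eq_square algebra_simps)
  have vertical: "s^2 * b + t^2 * c + s * t * ww = m + s * t * D"
    unfolding m_def D_def t by (simp add: power2_eq_square algebra_simps)
  have "s^2 * A + t^2 * A' + 2 * s * t * ii + (s^2 * b + t^2 * c + s * t * ww)^2
     = s^2 * (A + b^2) + t^2 * (A' + c^2) + 2 * s * t * (ii + b * c) + 2 * s * t * m * D + s^2 * t^2 * D^2"
    unfolding vertical m_def by (simp add: power2_eq_square algebra_simps)
  also have "\<dots> \<le> (s^2 + t^2) * a^2 + 2 * s * t * (ii + b * c) + 2 * s * t * m * D + s^2 * t^2 * D^2"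
    using mult_left_mono[OF h1, of "s^2"] mult_left_mono[OF h2, of "t^2"] by (simp add: distrib_right)
  also have "\<dots> = a^2 + s * t * (2 * (ii + b * c - a^2) + 2 * m * D + s * t * D^2)"
    unfolding sum_sq by (simp add: power2_eq_square algebra_simps)
  also have "\<dots> \<le> a^2 + s * t * E"
    unfolding E_def using st st4 by (intro add_left_mono mult_left_mono) auto
  also have "\<dots> \<le> a^2" using E_nonpos st by (simp add: mult_nonneg_nonpos)
  finally show ?thesis .
qed

lemma cball_convex_product:
  fixes P Q :: "'n::finite heis"
  assumes P: "P \<in> cball 0 a" and Q: "Q \<in> cball 0 a" and a: "0 < a" "a \<le> 2"
    and st: "s \<ge> 0" "t \<ge> 0" "s + t = 1"
  shows "hmult (hdil s P) (hdil t Q) \<in> cball 0 a"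
proof -
  obtain x y b x' y' c where PQ: "P = (x,y,b)" "Q = (x',y',c)" by (cases P; cases Q) auto
  define A where "A = norm x^2 + norm y^2"
  define A' where "A' = norm x'^2 + norm y'^2"
  define ii where "ii = x \<bullet> x' + y \<bullet> y'"
  define ww where "ww = (1/2) * (x \<bullet> y' - y \<bullet> x')"
  have h1: "A + b^2 \<le> a^2" and h2: "A' + c^2 \<le> a^2" using P Q a
    by (simp_all add: PQ A_def A'_def abs_le_square_iff[symmetric] norm_heis_sq[symmetric])
  have CS: "ii^2 + 4 * ww^2 \<le> A * A'"
    unfolding ii_def ww_def A_def A'_def by (rule inner_symplectic_bound)
  have "norm (hmult (hdil s P) (hdil t Q))^2
      = s^2 * A + t^2 * A' + 2 * s * t * ii + (s^2 * b + t^2 * c + s * t * ww)^2"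
    unfolding PQ hdil_simp hmult_simp norm_heis_sq norm_scaleR_add_sq A_def A'_def ii_def ww_def
    by (simp add: power2_eq_square algebra_simps)
  also have "\<dots> \<le> a^2"
    by (rule convex_product_estimate[OF _ _ CS h1 h2 a st]) (simp_all add: A_def A'_def)
  finally show ?thesis using a by (simp add: abs_le_square_iff[symmetric])
qed

text \<open>If p and q have gauge at most sp and sq, then delta_{1/R}(p q), R = sp + sq, is the
  convex product of the points delta_{1/sp} p and delta_{1/sq} q of B_a with weights sp/R, sq/R.\<close>
lemma gauge_hmult_le:
  assumes a: "0 < a" "a \<le> 2" and sp: "0 < sp" "gauge a p \<le> sp" and sq: "0 < sq" "gauge a q \<le> sq"
  shows "gauge a (hmult p q) \<le> sp + sq"
proof -
  define R where "R = sp + sq"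
  have R: "R > 0" using sp sq by (simp add: R_def)
  have P: "hdil (1/sp) p \<in> cball 0 a" using gauge_le_iff[OF sp(1) a(1)] sp(2) by blast
  have Q: "hdil (1/sq) q \<in> cball 0 a" using gauge_le_iff[OF sq(1) a(1)] sq(2) by blast
  have "hmult (hdil (sp/R) (hdil (1/sp) p)) (hdil (sq/R) (hdil (1/sq) q)) \<in> cball 0 a"
    using sp sq R by (intro cball_convex_product[OF P Q a]) (auto simp: R_def add_divide_distrib[symmetric])
  also have "hmult (hdil (sp/R) (hdil (1/sp) p)) (hdil (sq/R) (hdil (1/sq) q)) = hdil (1/R) (hmult p q)"
    using sp sq by (simp add: hdil_hdil hdil_hmult)
  finally have "hdil (1/R) (hmult p q) \<in> cball 0 a" .
  then show ?thesis using gauge_le_iff[OF R a(1)] unfolding R_def by blast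
qed

text \<open>Letting sp and sq decrease to the gauges of p and q gives subadditivity.\<close>
lemma gauge_triangle:
  assumes a: "0 < a" "a \<le> 2"
  shows "gauge a (hmult p q) \<le> gauge a p + gauge a q"
proof (rule field_le_epsilon)
  fix e :: real assume e: "e > 0"
  then have "0 < gauge a p + e/2" "0 < gauge a q + e/2"
    using gauge_nonneg[of a p] gauge_nonneg[of a q] by linarith+
  then have "gauge a (hmult p q) \<le> (gauge a p + e/2) + (gauge a q + e/2)"
    using e by (intro gauge_hmult_le a) auto
  then show "gauge a (hmult p q) \<le> gauge a p + gauge a q + e" by simp
qed

section \<open>The topology induced by d_alpha\<close>

lemma d_alpha_ball_in_ball:
  assumes a: "a > 0" and \<delta>: "\<delta> > 0"
  shows "\<exists>e>0. \<forall>q. d_alpha a p q < e \<longrightarrow> dist q p < \<delta>"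
proof -
  have "continuous (at (0,0,0)) (hmult p)"
    using hmult_continuous[of p] by (simp add: continuous_on_eq_continuous_at)
  then obtain \<eta> where \<eta>: "\<eta> > 0" "\<And>h. dist h (0,0,0) < \<eta> \<Longrightarrow> dist (hmult p h) p < \<delta>"
    using \<delta> unfolding continuous_at_eps_delta hmult_origin_right by blast
  define e where "e = min 1 (\<eta> / (2*a))"
  have e: "e > 0" "e \<le> 1" "a * e < \<eta>"
    using \<eta> a by (auto simp: e_def min_def field_simps)
  have "dist q p < \<delta>" if "d_alpha a p q < e" for q
  proof -
    have "norm (hmult (hinv p) q) \<le> a * e"
      using that e a by (intro norm_le_of_gauge_le) (auto simp: d_alpha_eq_gauge)
    then have "dist (hmult (hinv p) q) (0,0,0) < \<eta>"
      using e by (simp add: dist_norm zero_prod_def[symmetric])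
    from \<eta>(2)[OF this] show ?thesis by (simp only: hmult_hinv_cancel)
  qed
  then show ?thesis using e(1) by blast
qed

text \<open>Conversely, d_alpha a p is continuous, so d_alpha-balls contain Euclidean balls.\<close>
lemma ball_in_d_alpha_ball:
  assumes a: "a > 0" and e: "e > 0"
  shows "\<exists>\<delta>>0. \<forall>q. dist q p < \<delta> \<longrightarrow> d_alpha a p q < e"
proof -
  have "continuous_on UNIV (\<lambda>q. gauge a (hmult (hinv p) q))"
    by (rule continuous_on_compose2[OF gauge_continuous hmult_continuous]) simp
  moreover have "d_alpha a p = (\<lambda>q. gauge a (hmult (hinv p) q))"
    by (intro ext) (rule d_alpha_eq_gauge[OF a])
  ultimately have "continuous (at p) (d_alpha a p)"
    by (metis UNIV_I continuous_on_eq_continuous_at open_UNIV)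
  moreover have "d_alpha a p p = 0"
    by (simp add: d_alpha_eq_gauge[OF a] gauge_eq_0_iff[OF a] hmult_hinv_eq_origin)
  ultimately show ?thesis
    using e unfolding continuous_at_eps_delta by (force simp: dist_real_def)
qed

lemma d_alpha_eq_0_iff:
  assumes "a > 0"
  shows "d_alpha a p q = 0 \<longleftrightarrow> p = q"
  by (simp add: d_alpha_eq_gauge assms gauge_eq_0_iff hmult_hinv_eq_origin)

lemma d_alpha_sym:
  assumes "a > 0"
  shows "d_alpha a p q = d_alpha a q p"
  by (metis d_alpha_eq_gauge[OF assms] gauge_hinv hinv_hmult_hinv)

lemma d_alpha_triangle:
  assumes "0 < a" "a \<le> 2"
  shows "d_alpha a p r \<le> d_alpha a p q + d_alpha a q r"
  unfolding d_alpha_eq_gauge[OF assms(1)] by (subst hmult_hinv_chain[of p r q]) (rule gauge_triangle[OF assms])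

lemma d_alpha_left_invariant:
  assumes "a > 0"
  shows "d_alpha a (hmult p q) (hmult p q') = d_alpha a q q'"
  by (simp add: d_alpha_eq_gauge assms hmult_hinv_left_translate)

lemma d_alpha_hdil:
  assumes "a > 0" "l > 0"
  shows "d_alpha a (hdil l p) (hdil l q) = l * d_alpha a p q"
  by (simp add: d_alpha_eq_gauge assms hmult_hinv_hdil gauge_hdil)

lemma d_alpha_open_iff:
  assumes a: "a > 0"
  shows "open U \<longleftrightarrow> (\<forall>p\<in>U. \<exists>e>0. \<forall>q. d_alpha a p q < e \<longrightarrow> q \<in> U)"
proof
  assume "open U"
  then show "\<forall>p\<in>U. \<exists>e>0. \<forall>q. d_alpha a p q < e \<longrightarrow> q \<in> U"
    unfolding open_dist by (meson d_alpha_ball_in_ball[OF a])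
next
  assume "\<forall>p\<in>U. \<exists>e>0. \<forall>q. d_alpha a p q < e \<longrightarrow> q \<in> U"
  then show "open U"
    unfolding open_dist by (meson ball_in_d_alpha_ball[OF a])
qed

theorem mainTheorem2:
  fixes a :: real
  assumes "0 < a" and "a \<le> 2"
  shows "homogeneous_distance (d_alpha a :: 'n::finite heis \<Rightarrow> 'n heis \<Rightarrow> real)"
  unfolding homogeneous_distance_def
  by (intro conjI allI impI d_alpha_eq_0_iff d_alpha_sym d_alpha_triangle d_alpha_open_iff
      d_alpha_left_invariant d_alpha_hdil assms)

end
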